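(* Let $M,t\ge 1$ be integers and $n=Mt$. Let $S_1,\dots,S_t\subseteq U$ be finite sets with $|S_k|\le M$ for every $k$, and let $x\in S_1\cap\dots\cap S_t$. In the single-table hashing model: 1. For every $p\in[0,1]$, $\Pr[x \text{ is placed in the tables of all } S_1,\dots,S_t \mid H(x)=p]\ge e^{-p}$. 2. Consequently, the probability that $x$ fails to be placed in the table of at least one $S_k$ is at most $\int_0^1(1-e^{-p})\,dp=e^{-1}$. 3. If $m$ tables are built with mutually independent pairs $(h_1,H_1),\dots,(h_m,H_m)$, each pair distributed as in the model, then the probability that in every one of the $m$ tables $x$ fails to be placed in the table of at least one $S_k$ is at most $e^{-m}$. In particular, for $m=28$ this is at most $2^{-40}$.
   Context: Single-table hashing model. Let $U$ be a universe of elements and let $n=Mt$ bins, indexed by $[n]=\{1,\dots,n\}$. The mapping hash $h:U\to[n]$ is a uniformly random function. The ordering hash $H:U\to[0,1]$ is a random function whose values are i.i.d. uniform on $[0,1]$, and $H$ is independent of $h$. For a finite set $S\subseteq U$ and an element $x\in S$, we say $x$ is placed in the table of $S$ if every $s\in S\setminus\{x\}$ with $h(s)=h(x)$ satisfies $H(s)>H(x)$. Equivalently, among all elements of $S$ that map to bin $h(x)$, only the one with the smallest $H$-value is stored, and it is stored in that bin. All $t$ sets use the same $h$ and $H$ within one table. *)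

theory Defs
  imports "HOL-Probability.Probability"
begin

definition hash_space :: "nat \<Rightarrow> ('a \<Rightarrow> nat) measure" where
  "hash_space n = PiM UNIV (\<lambda>_. uniform_count_measure {1..n})"

definition order_space :: "('a \<Rightarrow> real) measure" where
  "order_space = PiM UNIV (\<lambda>_. uniform_measure lborel {0..1::real})"

definition table_space :: "nat \<Rightarrow> (('a \<Rightarrow> nat) \<times> ('a \<Rightarrow> real)) measure" where
  "table_space n = hash_space n \<Otimes>\<^sub>M order_space"

definition placed :: "'a set \<Rightarrow> 'a \<Rightarrow> ('a \<Rightarrow> nat) \<Rightarrow> ('a \<Rightarrow> real) \<Rightarrow> bool" where
  "placed S x h H \<longleftrightarrow> (\<forall>s \<in> S - {x}. h s = h x \<longrightarrow> H s > H x)"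

end

theory Submission imports Defs begin

text \<open>Let U be the union of the S k without x; it has at most n - 1 elements, and x is placed
  in all tables iff no element of U in the bin of x has a smaller ordering value. Fix H x = p and
  condition on the bin of x: the elements of U fall into that bin independently with probability
  1/n and then undercut x with probability p, so x survives with probability
  (1 - p/n)^|U| \<ge> (1 - p/n)^(n-1) \<ge> exp (-p). As H x is uniform and independent of the rest,
  x fails in some table with probability at most the integral of 1 - exp (-p) over [0,1], which
  is exp (-1); independent tables multiply these bounds, and exp (-28) \<le> 2^-40 because e > 2.7.\<close>

section \<open>Products of identical probability spaces\<close>

lemma measurable_pair_fun_upd_PiM[measurable]:
  fixes x :: 'i and N :: "'b measure"
  shows "(\<lambda>(y, w). w(x := y)) \<in> N \<Otimes>\<^sub>M PiM (UNIV - {x}) (\<lambda>_. N) \<rightarrow>\<^sub>M PiM UNIV (\<lambda>_. N)"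
proof (rule measurable_PiM_single')
  fix i :: 'i
  show "(\<lambda>z. (case z of (y, w) \<Rightarrow> w(x := y)) i) \<in> N \<Otimes>\<^sub>M PiM (UNIV - {x}) (\<lambda>_. N) \<rightarrow>\<^sub>M N"
  proof (cases "i = x")
    case False
    have "(\<lambda>z. snd z i) \<in> N \<Otimes>\<^sub>M PiM (UNIV - {x}) (\<lambda>_. N) \<rightarrow>\<^sub>M N"
      using False measurable_compose[OF measurable_snd measurable_component_singleton[of i "UNIV - {x}" "\<lambda>_. N"]]
      by simp
    then show ?thesis using False by (simp add: case_prod_beta')
  qed (simp add: case_prod_beta')
next
  show "(\<lambda>(y, w). w(x := y)) \<in> space (N \<Otimes>\<^sub>M PiM (UNIV - {x}) (\<lambda>_. N)) \<rightarrow> (\<Pi>\<^sub>E i\<in>UNIV. space N)"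
  proof
    fix z assume "z \<in> space (N \<Otimes>\<^sub>M PiM (UNIV - {x}) (\<lambda>_. N))"
    then have "fst z \<in> space N" and "snd z \<in> PiE (UNIV - {x}) (\<lambda>_. space N)"
      by (simp_all add: space_pair_measure space_PiM mem_Times_iff)
    then have "\<forall>i. ((snd z)(x := fst z)) i \<in> space N" by (simp add: PiE_iff)
    then show "(case z of (y, w) \<Rightarrow> w(x := y)) \<in> (\<Pi>\<^sub>E i\<in>UNIV. space N)"
      by (simp add: PiE_iff case_prod_beta')
  qed
qed

lemma nn_integral_PiM_prod:
  fixes N :: "'b measure" and I J :: "'i set"
  assumes "prob_space N" and J: "finite J" "J \<subseteq> I"
    and [measurable]: "\<And>j. j \<in> J \<Longrightarrow> f j \<in> borel_measurable N"
  shows "(\<integral>\<^sup>+w. (\<Prod>j\<in>J. f j (w j)) \<partial>PiM I (\<lambda>_. N)) = (\<Prod>j\<in>J. \<integral>\<^sup>+y. f j y \<partial>N)"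
proof -
  interpret N: prob_space N by fact
  interpret P: product_prob_space "\<lambda>_. N" I by standard
  have "(\<integral>\<^sup>+w. (\<Prod>j\<in>J. f j (w j)) \<partial>PiM I (\<lambda>_. N))
      = (\<integral>\<^sup>+w. (\<Prod>j\<in>J. f j (restrict w J j)) \<partial>PiM I (\<lambda>_. N))"
    by (intro nn_integral_cong prod.cong) auto
  also have "\<dots> = (\<integral>\<^sup>+w. (\<Prod>j\<in>J. f j (w j)) \<partial>distr (PiM I (\<lambda>_. N)) (PiM J (\<lambda>_. N)) (\<lambda>w. restrict w J))"
    using J by (subst nn_integral_distr) (auto intro!: measurable_restrict_subset borel_measurable_prod_ennreal)
  also have "\<dots> = (\<integral>\<^sup>+w. (\<Prod>j\<in>J. f j (w j)) \<partial>PiM J (\<lambda>_. N))"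
    using J by (simp add: P.distr_PiM_restrict_finite)
  also have "\<dots> = (\<Prod>j\<in>J. \<integral>\<^sup>+y. f j y \<partial>N)"
    using J by (intro P.product_nn_integral_prod) auto
  finally show ?thesis .
qed

lemma prod_indicator_eq_of_bool:
  "finite J \<Longrightarrow> (\<Prod>j\<in>J. indicator (A j) (w j) :: ennreal) = of_bool (\<forall>j\<in>J. w j \<in> A j)"
  by (induct J rule: finite_induct) (auto simp: indicator_def)

lemma nn_integral_PiM_split_coordinate:
  fixes N :: "'b measure" and x :: 'i
  assumes N: "prob_space N" and f[measurable]: "f \<in> borel_measurable (PiM UNIV (\<lambda>_. N))"
  shows "(\<integral>\<^sup>+w. f w \<partial>PiM UNIV (\<lambda>_. N))
       = (\<integral>\<^sup>+y. \<integral>\<^sup>+w. f (w(x := y)) \<partial>PiM (UNIV - {x}) (\<lambda>_. N) \<partial>N)"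
proof -
  interpret R: prob_space "PiM (UNIV - {x}) (\<lambda>_. N)" by (rule prob_space_PiM) (rule N)
  have "insert x (UNIV - {x}) = UNIV" by auto
  then have distr_eq: "distr (N \<Otimes>\<^sub>M PiM (UNIV - {x}) (\<lambda>_. N)) (PiM UNIV (\<lambda>_. N)) (\<lambda>(y, w). w(x := y))
      = PiM UNIV (\<lambda>_. N)"
    using distr_pair_PiM_eq_PiM[of "UNIV - {x}" "\<lambda>_. N" x] N by simp
  have "(\<integral>\<^sup>+w. f w \<partial>PiM UNIV (\<lambda>_. N))
      = (\<integral>\<^sup>+w. f w \<partial>distr (N \<Otimes>\<^sub>M PiM (UNIV - {x}) (\<lambda>_. N)) (PiM UNIV (\<lambda>_. N)) (\<lambda>(y, w). w(x := y)))"
    by (simp add: distr_eq)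
  also have "\<dots> = (\<integral>\<^sup>+z. f ((\<lambda>(y, w). w(x := y)) z) \<partial>(N \<Otimes>\<^sub>M PiM (UNIV - {x}) (\<lambda>_. N)))"
    by (rule nn_integral_distr) measurable
  also have "\<dots> = (\<integral>\<^sup>+y. \<integral>\<^sup>+w. f (w(x := y)) \<partial>PiM (UNIV - {x}) (\<lambda>_. N) \<partial>N)"
    by (subst R.nn_integral_fst[symmetric])
       (rule measurable_compose[OF measurable_pair_fun_upd_PiM f], simp)
  finally show ?thesis .
qed

text \<open>If the integrand sees the coordinate w x only through its first argument, that
  coordinate may be replaced by an independent copy.\<close>
lemma nn_integral_PiM_condition_coordinate:
  fixes N :: "'b measure" and x :: 'i
  assumes N: "prob_space N"
    and f[measurable]: "(\<lambda>(y, w). f y w) \<in> borel_measurable (N \<Otimes>\<^sub>M PiM UNIV (\<lambda>_. N))"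
    and f_ignores_x: "\<And>y w z. f y (w(x := z)) = f y w"
  shows "(\<integral>\<^sup>+w. f (w x) w \<partial>PiM UNIV (\<lambda>_. N)) = (\<integral>\<^sup>+y. \<integral>\<^sup>+w. f y w \<partial>PiM UNIV (\<lambda>_. N) \<partial>N)"
proof -
  interpret N: prob_space N by fact
  define R where "R = PiM (UNIV - {x}) (\<lambda>_. N)"
  have f_y: "f y \<in> borel_measurable (PiM UNIV (\<lambda>_. N))" if "y \<in> space N" for y
    using measurable_Pair2[OF f that] by simp
  have "(\<integral>\<^sup>+w. f (w x) w \<partial>PiM UNIV (\<lambda>_. N)) = (\<integral>\<^sup>+y. \<integral>\<^sup>+w. f y (w(x := y)) \<partial>R \<partial>N)"
  proof -
    have "(\<lambda>w. f (w x) w) \<in> borel_measurable (PiM UNIV (\<lambda>_. N))"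
      by measurable
    from nn_integral_PiM_split_coordinate[OF N this, of x] show ?thesis
      by (simp add: R_def)
  qed
  also have "\<dots> = (\<integral>\<^sup>+y. \<integral>\<^sup>+y'. \<integral>\<^sup>+w. f y (w(x := y')) \<partial>R \<partial>N \<partial>N)"
    by (simp add: f_ignores_x N.emeasure_space_1)
  also have "\<dots> = (\<integral>\<^sup>+y. \<integral>\<^sup>+w. f y w \<partial>PiM UNIV (\<lambda>_. N) \<partial>N)"
    unfolding R_def
    by (intro nn_integral_cong nn_integral_PiM_split_coordinate[OF N, symmetric] f_y)
  finally show ?thesis .
qed

lemma nn_integral_uniform_count_measure:
  fixes g :: "'b \<Rightarrow> real"
  assumes A: "finite A" "A \<noteq> {}" and g: "\<And>a. a \<in> A \<Longrightarrow> 0 \<le> g a"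
  shows "(\<integral>\<^sup>+a. ennreal (g a) \<partial>uniform_count_measure A) = ennreal ((\<Sum>a\<in>A. g a) / card A)"
proof -
  have "(\<integral>\<^sup>+a. ennreal (g a) \<partial>uniform_count_measure A)
      = (\<Sum>a\<in>A. ennreal (1 / real (card A)) * ennreal (g a))"
    unfolding uniform_count_measure_def using A by (simp add: nn_integral_point_measure_finite)
  also have "\<dots> = (\<Sum>a\<in>A. ennreal (g a / card A))"
    using g by (intro sum.cong refl) (simp add: ennreal_mult[symmetric])
  also have "\<dots> = ennreal (\<Sum>a\<in>A. g a / card A)"
    using g by (intro sum_ennreal) auto
  finally show ?thesis by (simp add: sum_divide_distrib)
qed

lemma pred_eq_count_space_finite[measurable (raw)]:
  fixes f g :: "'b \<Rightarrow> 'c"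
  assumes "f \<in> M \<rightarrow>\<^sub>M count_space A" "g \<in> M \<rightarrow>\<^sub>M count_space A" "finite A"
  shows "Measurable.pred M (\<lambda>\<omega>. f \<omega> = g \<omega>)"
proof -
  have "Measurable.pred M (\<lambda>\<omega>. \<exists>v\<in>A. f \<omega> = v \<and> g \<omega> = v)"
    using assms by measurable
  moreover have "{\<omega> \<in> space M. f \<omega> = g \<omega>} = {\<omega> \<in> space M. \<exists>v\<in>A. f \<omega> = v \<and> g \<omega> = v}"
    using assms(1)[THEN measurable_space] by auto
  ultimately show ?thesis
    unfolding Measurable.pred_def by simp
qed

lemma prob_PiM_all_coordinates_le:
  assumes "prob_space N" and F: "F \<in> sets N" and "measure N F \<le> q"
  shows "{\<omega> \<in> space (PiM {..<m} (\<lambda>_. N)). \<forall>j<m. \<omega> j \<in> F} \<in> sets (PiM {..<m} (\<lambda>_. N))"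
    and "measure (PiM {..<m} (\<lambda>_. N)) {\<omega> \<in> space (PiM {..<m} (\<lambda>_. N)). \<forall>j<m. \<omega> j \<in> F} \<le> q ^ m"
proof -
  interpret N: prob_space N by fact
  interpret finite_product_prob_space "\<lambda>_. N" "{..<m}" by unfold_locales simp
  have event: "{\<omega> \<in> space (PiM {..<m} (\<lambda>_. N)). \<forall>j<m. \<omega> j \<in> F} = PiE {..<m} (\<lambda>_. F)"
    using sets.sets_into_space[OF F] by (auto simp: space_PiM PiE_iff extensional_def)
  show "{\<omega> \<in> space (PiM {..<m} (\<lambda>_. N)). \<forall>j<m. \<omega> j \<in> F} \<in> sets (PiM {..<m} (\<lambda>_. N))"
    unfolding event using F by (auto intro!: sets_PiM_I_finite)
  have "measure (PiM {..<m} (\<lambda>_. N)) (PiE {..<m} (\<lambda>_. F)) = measure N F ^ m"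
    using F by (subst finite_measure_PiM_emb) simp_all
  also have "\<dots> \<le> q ^ m"
    using assms(3) by (intro power_mono) auto
  finally show "measure (PiM {..<m} (\<lambda>_. N)) {\<omega> \<in> space (PiM {..<m} (\<lambda>_. N)). \<forall>j<m. \<omega> j \<in> F} \<le> q ^ m"
    unfolding event .
qed

section \<open>Elementary estimates\<close>

lemma uniform_measure_unit_interval_Ioi:
  assumes "0 \<le> p" "p \<le> 1"
  shows "emeasure (uniform_measure lborel {0..1::real}) {p<..} = ennreal (1 - p)"
proof -
  have "{0..1} \<inter> {p<..} = {p<..1::real}" using assms by auto
  then show ?thesis using assms by (subst emeasure_uniform_measure) (auto simp: divide_ennreal_def)
qed

lemma nn_integral_uniform_unit_interval_exp:
  "(\<integral>\<^sup>+y. ennreal (exp (- y)) \<partial>uniform_measure lborel {0..1::real}) = ennreal (1 - exp (- 1))"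
proof -
  have "((\<lambda>y. exp (- y)) has_integral (- exp (- 1) - (- exp (- 0)))) {0..1::real}"
    by (rule fundamental_theorem_of_calculus)
       (auto intro!: derivative_eq_intros simp: has_real_derivative_iff_has_vector_derivative[symmetric])
  then have "((\<lambda>y. exp (- y)) has_integral (1 - exp (- 1))) {0..1::real}"
    by simp
  then have "(\<integral>\<^sup>+y. ennreal (exp (- y)) * indicator {0..1} y \<partial>lborel) = ennreal (1 - exp (- 1))"
    by (rule nn_integral_has_integral_lebesgue'[rotated]) simp
  moreover have "(\<integral>\<^sup>+y. ennreal (exp (- y)) \<partial>uniform_measure lborel {0..1::real})
      = (\<integral>\<^sup>+y. ennreal (exp (- y)) * indicator {0..1} y \<partial>lborel) / emeasure lborel {0..1::real}"
    by (rule nn_integral_uniform_measure) auto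
  ultimately show ?thesis
    by (simp add: divide_ennreal_def)
qed

lemma interval_integral_one_minus_exp_minus:
  "(LBINT p=0..1. 1 - exp (- p)) = exp (- 1 :: real)"
proof -
  have "(LBINT p=ereal 0..ereal 1. 1 - exp (- p)) = (1 + exp (- 1)) - (0 + exp (- 0::real))"
    by (rule interval_integral_FTC_finite[where F="\<lambda>p. p + exp (- p)"])
       (auto intro!: continuous_intros derivative_eq_intros
             simp: has_real_derivative_iff_has_vector_derivative[symmetric])
  then show ?thesis by (simp add: zero_ereal_def one_ereal_def)
qed

lemma exp_minus_le_one_minus_divide_power:
  fixes n N :: nat and p :: real
  assumes n: "1 \<le> n" and N: "N \<le> n - 1" and p: "0 \<le> p" "p \<le> 1"
  shows "exp (- p) \<le> (1 - p / n) ^ N"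
proof (cases "n = 1")
  case True
  then show ?thesis using N p by simp
next
  case False
  then have n_pos: "real n - 1 > 0" using n by simp
  define a where "a = p / (real n - 1)"
  have "exp (- a) \<le> 1 / (1 + a)"
    using exp_ge_add_one_self[of a] n_pos p by (simp add: a_def exp_minus field_simps)
  also have "\<dots> = (real n - 1) / (real n - 1 + p)"
    using n_pos by (simp add: a_def field_simps)
  also have "\<dots> \<le> 1 - p / n"
  proof -
    have "p * p \<le> p" using p by (simp add: mult_le_one mult_left_le)
    then have "(real n - 1) * real n \<le> (real n - p) * (real n - 1 + p)" by (simp add: algebra_simps)
    then show ?thesis using n_pos p by (simp add: field_simps)
  qed
  finally have "exp (- a) \<le> 1 - p / n" .
  then have "exp (- a) ^ (n - 1) \<le> (1 - p / n) ^ (n - 1)"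
    by (rule power_mono) simp
  moreover have "exp (- p) = exp (- a) ^ (n - 1)"
    using n_pos by (simp add: a_def exp_of_nat_mult[symmetric] of_nat_diff)
  moreover have "(1 - p / n) ^ (n - 1) \<le> (1 - p / n) ^ N"
    using N p n_pos by (intro power_decreasing) (auto simp: field_simps)
  ultimately show ?thesis by linarith
qed

lemma exp_minus_28_le: "exp (- 28) \<le> (1 / 2 ^ 40 :: real)"
proof -
  have "(101 / 100 :: real) ^ 100 < exp 1"
    using exp_1_gt_powr[of 100] by (simp add: powr_realpow)
  moreover have "(27 / 10 :: real) \<le> (101 / 100) ^ 100"
    by (simp add: power_divide)
  ultimately have "(27 / 10 :: real) ^ 28 \<le> exp 1 ^ 28"
    by (intro power_mono) auto
  moreover have "(2 :: real) ^ 40 \<le> (27 / 10) ^ 28"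
    by (simp add: power_divide)
  moreover have "exp 1 ^ 28 = exp (28 :: real)"
    by (simp add: exp_of_nat_mult[symmetric])
  ultimately have "2 ^ 40 \<le> exp (28 :: real)" by linarith
  then show ?thesis by (simp add: exp_minus field_simps)
qed

section \<open>The single-table hashing model\<close>

text \<open>The ordering value of x is a separate argument y so that it can be conditioned on;
  x is placed iff y = H x wins (see placed_all_iff_wins_bin).\<close>
definition wins_bin :: "'a set \<Rightarrow> 'a \<Rightarrow> ('a \<Rightarrow> nat) \<Rightarrow> real \<Rightarrow> ('a \<Rightarrow> real) \<Rightarrow> bool" where
  "wins_bin U x h y H \<longleftrightarrow> (\<forall>s\<in>U. h s = h x \<longrightarrow> y < H s)"

lemma wins_bin_fun_upd: "x \<notin> U \<Longrightarrow> wins_bin U x h y (H(x := z)) \<longleftrightarrow> wins_bin U x h y H"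
  by (auto simp: wins_bin_def)

lemma placed_all_iff_wins_bin:
  "(\<forall>k\<in>K. placed (S k) x h H) \<longleftrightarrow> wins_bin ((\<Union>k\<in>K. S k) - {x}) x h (H x) H"
  by (auto simp: placed_def wins_bin_def)

lemma measurable_hash_space_component[measurable]:
  "(\<lambda>h. h s) \<in> hash_space n \<rightarrow>\<^sub>M count_space {1..n}"
  unfolding hash_space_def
  by (simp add: measurable_cong_sets[OF refl sets_uniform_count_measure_count_space, symmetric])

lemma measurable_order_space_component[measurable]:
  "(\<lambda>H. H s) \<in> borel_measurable order_space"
  unfolding order_space_def
  by (simp add: measurable_cong_sets[OF refl sets_uniform_measure, symmetric])

lemma pred_wins_bin[measurable (raw)]:
  assumes "finite U"
    and "h \<in> M \<rightarrow>\<^sub>M hash_space n" "y \<in> borel_measurable M" "H \<in> M \<rightarrow>\<^sub>M order_space"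
  shows "Measurable.pred M (\<lambda>\<omega>. wins_bin U x (h \<omega>) (y \<omega>) (H \<omega>))"
  using assms unfolding wins_bin_def by measurable

lemma prob_space_hash_space: "1 \<le> n \<Longrightarrow> prob_space (hash_space n)"
  unfolding hash_space_def by (intro prob_space_PiM prob_space_uniform_count_measure) auto

lemma prob_space_unit_interval: "prob_space (uniform_measure lborel {0..1::real})"
  by (rule prob_space_uniform_measure) auto

lemma prob_space_order_space: "prob_space order_space"
  unfolding order_space_def by (intro prob_space_PiM prob_space_unit_interval)

lemma prob_space_table_space: "1 \<le> n \<Longrightarrow> prob_space (table_space n)"
  unfolding table_space_def
  by (intro prob_space_pair prob_space_hash_space prob_space_order_space)

lemma emeasure_table_space:
  assumes n: "1 \<le> n" and R: "Measurable.pred (table_space n) (\<lambda>(h, H). R h H)"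
  shows "emeasure (table_space n) {(h, H) \<in> space (table_space n). R h H}
       = (\<integral>\<^sup>+h. \<integral>\<^sup>+H. of_bool (R h H) \<partial>order_space \<partial>hash_space n)"
proof -
  interpret hash: prob_space "hash_space n" using n by (rule prob_space_hash_space)
  interpret order: prob_space order_space by (rule prob_space_order_space)
  interpret pair_prob_space "hash_space n" order_space ..
  have "{(h, H) \<in> space (table_space n). R h H} = {z \<in> space (table_space n). case z of (h, H) \<Rightarrow> R h H}"
    by auto
  then have "emeasure (table_space n) {(h, H) \<in> space (table_space n). R h H}
      = (\<integral>\<^sup>+z. of_bool (case z of (h, H) \<Rightarrow> R h H) \<partial>table_space n)"
    using R by (simp add: Measurable.pred_def indicator_def flip: nn_integral_indicator
        cong: nn_integral_cong_simp)
  also have "\<dots> = (\<integral>\<^sup>+h. \<integral>\<^sup>+H. of_bool (R h H) \<partial>order_space \<partial>hash_space n)"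
    unfolding table_space_def using R
    by (subst order.nn_integral_fst[symmetric]) (simp_all add: table_space_def)
  finally show ?thesis .
qed

lemma nn_integral_order_space_wins_bin:
  assumes U: "finite U" and p: "0 \<le> p" "p \<le> 1"
  shows "(\<integral>\<^sup>+H. of_bool (wins_bin U x h p H) \<partial>order_space)
       = (\<Prod>s\<in>U. ennreal (if h s = h x then 1 - p else 1))"
proof -
  define L where "L = uniform_measure lborel {0..1::real}"
  define B where "B s = (if h s = h x then {p<..} else UNIV)" for s
  have "(\<integral>\<^sup>+H. of_bool (wins_bin U x h p H) \<partial>order_space)
      = (\<integral>\<^sup>+H. (\<Prod>s\<in>U. indicator (B s) (H s)) \<partial>PiM UNIV (\<lambda>_. L))"
    unfolding order_space_def L_def using U
    by (intro nn_integral_cong) (auto simp: prod_indicator_eq_of_bool wins_bin_def B_def)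
  also have "\<dots> = (\<Prod>s\<in>U. emeasure L (B s))"
    using U by (subst nn_integral_PiM_prod)
      (simp_all add: L_def B_def prob_space_unit_interval measurable_cong_sets[OF sets_uniform_measure refl])
  also have "\<dots> = (\<Prod>s\<in>U. ennreal (if h s = h x then 1 - p else 1))"
    using prob_space.emeasure_space_1[OF prob_space_unit_interval]
    by (intro prod.cong refl)
       (simp add: L_def B_def uniform_measure_unit_interval_Ioi[OF p] del: emeasure_uniform_measure)
  finally show ?thesis .
qed

lemma nn_integral_hash_space_collisions:
  assumes U: "finite U" "x \<notin> U" and n: "1 \<le> n" and p: "0 \<le> p" "p \<le> 1"
  shows "(\<integral>\<^sup>+h. (\<Prod>s\<in>U. ennreal (if h s = h x then 1 - p else 1)) \<partial>hash_space n)
       = ennreal ((1 - p / n) ^ card U)"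
proof -
  define C where "C = uniform_count_measure {1..n}"
  interpret C: prob_space C unfolding C_def using n by (intro prob_space_uniform_count_measure) auto
  have C_measurable: "g \<in> borel_measurable C" for g :: "nat \<Rightarrow> ennreal"
    by (simp add: C_def measurable_cong_sets[OF sets_uniform_count_measure_count_space refl])
  have q_nonneg: "0 \<le> 1 - p / n" using n p by (simp add: field_simps)
  have collision: "(\<integral>\<^sup>+a. ennreal (if a = v then 1 - p else 1) \<partial>C) = ennreal (1 - p / n)"
    if v: "v \<in> {1..n}" for v
  proof -
    have "(\<Sum>a\<in>{1..n}. if a = v then 1 - p else 1) = (\<Sum>a\<in>{1..n}. 1 - (if a = v then p else 0))"
      by (intro sum.cong) auto
    also have "\<dots> = real n - p" using v by (simp add: sum_subtractf)
    finally show ?thesis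
      unfolding C_def using n p by (subst nn_integral_uniform_count_measure) (auto simp: diff_divide_distrib)
  qed
  have [measurable]: "(\<lambda>(v, h). \<Prod>s\<in>U. ennreal (if h s = v then 1 - p else 1))
      \<in> borel_measurable (C \<Otimes>\<^sub>M PiM UNIV (\<lambda>_. C))"
    unfolding C_def using U by measurable
  have "(\<integral>\<^sup>+h. (\<Prod>s\<in>U. ennreal (if h s = h x then 1 - p else 1)) \<partial>PiM UNIV (\<lambda>_. C))
      = (\<integral>\<^sup>+v. \<integral>\<^sup>+h. (\<Prod>s\<in>U. ennreal (if h s = v then 1 - p else 1)) \<partial>PiM UNIV (\<lambda>_. C) \<partial>C)"
    using U by (intro nn_integral_PiM_condition_coordinate C.prob_space_axioms) (auto intro!: prod.cong)
  also have "\<dots> = (\<integral>\<^sup>+v. ennreal ((1 - p / n) ^ card U) \<partial>C)"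
  proof (intro nn_integral_cong)
    fix v assume "v \<in> space C"
    then have "v \<in> {1..n}" by (simp add: C_def space_uniform_count_measure)
    then show "(\<integral>\<^sup>+h. (\<Prod>s\<in>U. ennreal (if h s = v then 1 - p else 1)) \<partial>PiM UNIV (\<lambda>_. C))
        = ennreal ((1 - p / n) ^ card U)"
      using U q_nonneg
      by (subst nn_integral_PiM_prod[OF C.prob_space_axioms])
         (simp_all add: collision ennreal_power C_measurable)
  qed
  also have "\<dots> = ennreal ((1 - p / n) ^ card U)"
    by (simp add: C.emeasure_space_1)
  finally show ?thesis
    by (simp add: hash_space_def C_def)
qed

lemma emeasure_wins_bin_fixed_value:
  assumes U: "finite U" "x \<notin> U" and n: "1 \<le> n" and p: "0 \<le> p" "p \<le> 1"
  shows "emeasure (table_space n) {(h, H) \<in> space (table_space n). wins_bin U x h p H}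
       = ennreal ((1 - p / n) ^ card U)"
proof -
  have "Measurable.pred (table_space n) (\<lambda>(h, H). wins_bin U x h p H)"
    unfolding table_space_def using U by measurable
  then show ?thesis
    using U n p
    by (simp add: emeasure_table_space nn_integral_order_space_wins_bin nn_integral_hash_space_collisions)
qed

lemma emeasure_wins_bin_own_value:
  assumes U: "finite U" "x \<notin> U" and n: "1 \<le> n"
  shows "emeasure (table_space n) {(h, H) \<in> space (table_space n). wins_bin U x h (H x) H}
       = (\<integral>\<^sup>+y. emeasure (table_space n) {(h, H) \<in> space (table_space n). wins_bin U x h y H}
            \<partial>uniform_measure lborel {0..1})"
proof -
  define L where "L = uniform_measure lborel {0..1::real}"
  interpret hash: prob_space "hash_space n" using n by (rule prob_space_hash_space)
  interpret L: prob_space L unfolding L_def by (rule prob_space_unit_interval)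
  interpret order: prob_space order_space by (rule prob_space_order_space)
  interpret pair_prob_space "hash_space n" L ..
  have [measurable]: "Measurable.pred (table_space n) (\<lambda>(h, H). wins_bin U x h y H)" for y
    unfolding table_space_def using U by measurable
  have "(\<lambda>(h, y). \<integral>\<^sup>+H. of_bool (wins_bin U x h y H) \<partial>order_space) \<in> borel_measurable (hash_space n \<Otimes>\<^sub>M L)"
  proof -
    have "(\<lambda>z. of_bool (wins_bin U x (fst (fst z)) (snd (fst z)) (snd z)) :: ennreal)
        \<in> borel_measurable ((hash_space n \<Otimes>\<^sub>M L) \<Otimes>\<^sub>M order_space)"
      unfolding L_def using U by measurable
    then show ?thesis
      unfolding case_prod_beta' by (rule order.borel_measurable_nn_integral[unfolded split_beta'])
  qed
  moreover have "(\<integral>\<^sup>+H. of_bool (wins_bin U x h (H x) H) \<partial>order_space)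
      = (\<integral>\<^sup>+y. \<integral>\<^sup>+H. of_bool (wins_bin U x h y H) \<partial>order_space \<partial>L)"
    if "h \<in> space (hash_space n)" for h
  proof -
    have "Measurable.pred (L \<Otimes>\<^sub>M order_space) (\<lambda>(y, H). wins_bin U x h y H)"
      unfolding L_def using U that by measurable
    then show ?thesis
      unfolding order_space_def L_def using U
      by (intro nn_integral_PiM_condition_coordinate prob_space_unit_interval)
         (simp_all add: order_space_def wins_bin_fun_upd)
  qed
  moreover have "Measurable.pred (table_space n) (\<lambda>(h, H). wins_bin U x h (H x) H)"
    unfolding table_space_def using U by measurable
  ultimately show ?thesis
    unfolding L_def[symmetric]
    using n by (simp add: emeasure_table_space Fubini'[symmetric] cong: nn_integral_cong)
qed

lemma measure_wins_bin_own_value_ge: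
  assumes U: "finite U" "x \<notin> U" and n: "1 \<le> n" and card: "card U \<le> n - 1"
  shows "1 - exp (- 1) \<le> measure (table_space n) {(h, H) \<in> space (table_space n). wins_bin U x h (H x) H}"
proof -
  interpret prob_space "table_space n" using n by (rule prob_space_table_space)
  have "ennreal (1 - exp (- 1)) = (\<integral>\<^sup>+y. ennreal (exp (- y)) \<partial>uniform_measure lborel {0..1})"
    by (rule nn_integral_uniform_unit_interval_exp[symmetric])
  also have "\<dots> \<le> (\<integral>\<^sup>+y. emeasure (table_space n) {(h, H) \<in> space (table_space n). wins_bin U x h y H}
            \<partial>uniform_measure lborel {0..1})"
  proof (rule nn_integral_mono_AE, rule AE_uniform_measureI)
    show "AE y in lborel. y \<in> {0..1} \<longrightarrow>
        ennreal (exp (- y)) \<le> emeasure (table_space n) {(h, H) \<in> space (table_space n). wins_bin U x h y H}"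
      using exp_minus_le_one_minus_divide_power[OF n card]
      by (intro AE_I2) (simp add: emeasure_wins_bin_fixed_value[OF U n] ennreal_leI)
  qed simp
  also have "\<dots> = emeasure (table_space n) {(h, H) \<in> space (table_space n). wins_bin U x h (H x) H}"
    by (rule emeasure_wins_bin_own_value[OF U n, symmetric])
  finally show ?thesis
    by (simp add: emeasure_eq_measure ennreal_le_iff)
qed

lemma card_Union_minus_le:
  assumes "finite K" and "\<And>k. k \<in> K \<Longrightarrow> finite (S k)" and "\<And>k. k \<in> K \<Longrightarrow> card (S k) \<le> M"
    and "\<And>k. k \<in> K \<Longrightarrow> x \<in> S k"
  shows "card ((\<Union>k\<in>K. S k) - {x}) \<le> card K * (M - 1)"
proof -
  have "card ((\<Union>k\<in>K. S k) - {x}) = card (\<Union>k\<in>K. S k - {x})"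
    by (rule arg_cong[where f = card]) blast
  also have "\<dots> \<le> (\<Sum>k\<in>K. card (S k - {x}))"
    by (rule card_UN_le) fact
  also have "\<dots> \<le> (\<Sum>k\<in>K. M - 1)"
    using assms by (intro sum_mono) (simp add: card_Diff_singleton diff_le_mono)
  finally show ?thesis by simp
qed

lemma measure_placed_all_fixed_value_ge:
  assumes n: "1 \<le> n" and fin: "finite (\<Union>k\<in>K. S k)"
    and card: "card ((\<Union>k\<in>K. S k) - {x}) \<le> n - 1" and p: "0 \<le> p" "p \<le> 1"
  shows "exp (- p) \<le> measure (table_space n)
           {(h, H) \<in> space (table_space n). \<forall>k\<in>K. placed (S k) x h (H(x := p))}"
proof -
  define U where "U = (\<Union>k\<in>K. S k) - {x}"
  have U: "finite U" "x \<notin> U" using fin by (auto simp: U_def)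
  have "{(h, H) \<in> space (table_space n). \<forall>k\<in>K. placed (S k) x h (H(x := p))}
      = {(h, H) \<in> space (table_space n). wins_bin U x h p H}"
    using U by (simp add: placed_all_iff_wins_bin wins_bin_fun_upd flip: U_def)
  moreover have "0 \<le> 1 - p / n" using n p by (simp add: field_simps)
  ultimately show ?thesis
    using emeasure_wins_bin_fixed_value[OF U n p] exp_minus_le_one_minus_divide_power[OF n _ p]
      card by (simp add: measure_def U_def)
qed

lemma measure_not_placed_some_le:
  assumes n: "1 \<le> n" and fin: "finite (\<Union>k\<in>K. S k)"
    and card: "card ((\<Union>k\<in>K. S k) - {x}) \<le> n - 1"
  shows "{(h, H) \<in> space (table_space n). \<exists>k\<in>K. \<not> placed (S k) x h H} \<in> sets (table_space n)"
    and "measure (table_space n) {(h, H) \<in> space (table_space n). \<exists>k\<in>K. \<not> placed (S k) x h H}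
         \<le> exp (- 1)"
proof -
  interpret prob_space "table_space n" using n by (rule prob_space_table_space)
  define F where "F = {(h, H) \<in> space (table_space n). \<exists>k\<in>K. \<not> placed (S k) x h H}"
  define U where "U = (\<Union>k\<in>K. S k) - {x}"
  have U: "finite U" "x \<notin> U" using fin by (auto simp: U_def)
  define A where "A = {(h, H) \<in> space (table_space n). wins_bin U x h (H x) H}"
  have "Measurable.pred (table_space n) (\<lambda>(h, H). wins_bin U x h (H x) H)"
    unfolding table_space_def using U by measurable
  then have A: "A \<in> sets (table_space n)"
    unfolding A_def Measurable.pred_def by (simp add: split_beta' case_prod_unfold)
  have F_eq: "F = space (table_space n) - A"
    unfolding F_def A_def U_def using placed_all_iff_wins_bin[of K S x] by blast
  have "F \<in> sets (table_space n)" unfolding F_eq using A by blast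
  moreover have "measure (table_space n) F \<le> exp (- 1)"
    using prob_compl[OF A] measure_wins_bin_own_value_ge[OF U n] card
    by (simp add: F_eq A_def U_def)
  ultimately show "{(h, H) \<in> space (table_space n). \<exists>k\<in>K. \<not> placed (S k) x h H} \<in> sets (table_space n)"
    and "measure (table_space n) {(h, H) \<in> space (table_space n). \<exists>k\<in>K. \<not> placed (S k) x h H}
         \<le> exp (- 1)"
    unfolding F_def by simp_all
qed

theorem mainTheorem2:
  fixes M t :: nat and S :: "nat \<Rightarrow> 'a set" and x :: 'a
  assumes "M \<ge> 1" and "t \<ge> 1"
    and "\<And>k. k \<in> {1..t} \<Longrightarrow> finite (S k)"
    and "\<And>k. k \<in> {1..t} \<Longrightarrow> card (S k) \<le> M"
    and "\<And>k. k \<in> {1..t} \<Longrightarrow> x \<in> S k"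
  shows
    "(\<forall>p \<in> {0..1::real}.
        measure (table_space (M * t))
          {(h, H) \<in> space (table_space (M * t)).
             \<forall>k \<in> {1..t}. placed (S k) x h (H(x := p))} \<ge> exp (- p))
     \<and> {(h, H) \<in> space (table_space (M * t)).
             \<exists>k \<in> {1..t}. \<not> placed (S k) x h H} \<in> sets (table_space (M * t))
     \<and> measure (table_space (M * t))
          {(h, H) \<in> space (table_space (M * t)).
             \<exists>k \<in> {1..t}. \<not> placed (S k) x h H}
        \<le> (LBINT p=0..1. 1 - exp (- p))
     \<and> (LBINT p=0..1. 1 - exp (- p)) = exp (- 1)
     \<and> (\<forall>m::nat.
        {\<omega> \<in> space (PiM {..<m} (\<lambda>_. table_space (M * t))).
             \<forall>j < m. \<exists>k \<in> {1..t}. \<not> placed (S k) x (fst (\<omega> j)) (snd (\<omega> j))}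
          \<in> sets (PiM {..<m} (\<lambda>_. table_space (M * t)))
        \<and> measure (PiM {..<m} (\<lambda>_. table_space (M * t)))
          {\<omega> \<in> space (PiM {..<m} (\<lambda>_. table_space (M * t))).
             \<forall>j < m. \<exists>k \<in> {1..t}. \<not> placed (S k) x (fst (\<omega> j)) (snd (\<omega> j))}
        \<le> exp (- real m))
     \<and> measure (PiM {..<28} (\<lambda>_. table_space (M * t)))
          {\<omega> \<in> space (PiM {..<28::nat} (\<lambda>_. table_space (M * t))).
             \<forall>j < 28. \<exists>k \<in> {1..t}. \<not> placed (S k) x (fst (\<omega> j)) (snd (\<omega> j))}
        \<le> 1 / 2 ^ 40"
proof -
  define n where "n = M * t"
  have n: "1 \<le> n" using assms(1,2) by (simp add: n_def)
  have "card ((\<Union>k\<in>{1..t}. S k) - {x}) \<le> t * (M - 1)"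
    using card_Union_minus_le[of "{1..t}" S M x] assms(3-5) by simp
  also have "\<dots> \<le> n - 1"
    using assms(1,2) by (simp add: n_def diff_mult_distrib2 mult.commute)
  finally have card: "card ((\<Union>k\<in>{1..t}. S k) - {x}) \<le> n - 1" .
  have fin: "finite (\<Union>k\<in>{1..t}. S k)" using assms(3) by simp
  note one_table_fails = measure_not_placed_some_le[OF n fin card]
  have all_tables_fail_eq: "{\<omega> \<in> space (PiM {..<m} (\<lambda>_. table_space n)).
        \<forall>j<m. \<exists>k\<in>{1..t}. \<not> placed (S k) x (fst (\<omega> j)) (snd (\<omega> j))}
      = {\<omega> \<in> space (PiM {..<m} (\<lambda>_. table_space n)).
        \<forall>j<m. \<omega> j \<in> {(h, H) \<in> space (table_space n). \<exists>k\<in>{1..t}. \<not> placed (S k) x h H}}" for m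
    by (auto simp: space_PiM PiE_iff split_beta')
  have "exp (- 1) ^ m = exp (- real m)" for m
    by (simp add: exp_of_nat_mult[symmetric])
  note all_tables_fail = prob_PiM_all_coordinates_le[OF prob_space_table_space[OF n] one_table_fails, unfolded this]
  have bound_28_tables: "measure (PiM {..<28} (\<lambda>_. table_space n))
      {\<omega> \<in> space (PiM {..<28::nat} (\<lambda>_. table_space n)).
        \<forall>j<28. \<omega> j \<in> {(h, H) \<in> space (table_space n). \<exists>k\<in>{1..t}. \<not> placed (S k) x h H}}
      \<le> 1 / 2 ^ 40"
    using all_tables_fail(2)[of 28] exp_minus_28_le by (simp only: of_nat_numeral)
  show ?thesis
    unfolding n_def[symmetric] all_tables_fail_eq interval_integral_one_minus_exp_minus
    by (intro conjI ballI allI one_table_fails all_tables_fail bound_28_tables refl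
        measure_placed_all_fixed_value_ge[OF n fin card]) auto
qed

end
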